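(* Let $0<\alpha<1$ and let $\bar M^\alpha(t)=\bar M(D_\alpha(t))$ be the multivariate generalized space fractional counting process. Then for every $\bar n=(n_1,\dots,n_q)\in\mathbb{N}_0^q$ and $t\ge0$, $$\Pr\{\bar M^\alpha(t)=\bar n\}=\sum_{\substack{\Omega(k_i,n_i)\\ i=1,\dots,q}}\sum_{r=0}^\infty\frac{(-t\lambda^\alpha)^r}{r!}\,\frac{\Gamma(\alpha r+1)}{\Gamma\big(\alpha r-\sum_{i=1}^q\sum_{j=1}^{k_i}x_{ij}+1\big)}\prod_{i=1}^q\prod_{j=1}^{k_i}\frac{(-\lambda_{ij}/\lambda)^{x_{ij}}}{x_{ij}!}.$$
   Context: Fix $q\ge1$, integers $k_1,\dots,k_q\ge1$, $\lambda_{ij}>0$ ($1\le i\le q$, $1\le j\le k_i$), $\lambda=\sum_{i,j}\lambda_{ij}$. The MGCP $\bar M(t)=(M_1(t),\dots,M_q(t))$ is the $\mathbb{N}_0^q$-valued process with $\bar M(0)=\bar0$, independent stationary increments and transition probabilities $\Pr\{\bar M(t+h)=\bar n+\bar j\mid\bar M(t)=\bar n\}=\lambda_{ij}h+o(h)$ if $\bar j$ has $i$th entry $j\in\{1,\dots,k_i\}$ and other entries $0$, $1-\lambda h+o(h)$ if $\bar j=\bar0$, $o(h)$ otherwise (equivalently, independent components with joint pgf $\exp(-t\sum_{i,j}\lambda_{ij}(1-u_i^j))$). $\{D_\alpha(t)\}$ is an $\alpha$-stable subordinator ($\mathbb{E}e^{-sD_\alpha(t)}=e^{-ts^\alpha}$)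 independent of $\bar M$. $\Omega(k_i,n_i)=\{(x_{i1},\dots,x_{ik_i})\in\mathbb{N}_0^{k_i}:\sum_j jx_{ij}=n_i\}$; the outer sum runs over all families $(x_{ij})$ with $(x_{i1},\dots,x_{ik_i})\in\Omega(k_i,n_i)$ for each $i$. Convention: $1/\Gamma(z)=0$ for $z\in\{0,-1,-2,\dots\}$. *)

theory Defs
  imports "HOL-Analysis.Analysis" "HOL-Probability.Probability"
begin

text \<open>Index conventions: components i range over {1..q}; for component i the jump
sizes j range over {1..k i}.  Vectors in N_0^q are functions nat => nat vanishing
outside {1..q}; families (x_ij) are functions nat => nat => nat vanishing outside the
index range.\<close>

definition natvecs :: "nat \<Rightarrow> (nat \<Rightarrow> nat) set" where
  "natvecs q = {n. \<forall>i. i \<notin> {1..q} \<longrightarrow> n i = 0}"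

definition total_rate :: "nat \<Rightarrow> (nat \<Rightarrow> nat) \<Rightarrow> (nat \<Rightarrow> nat \<Rightarrow> real) \<Rightarrow> real" where
  "total_rate q k lam = (\<Sum>i=1..q. \<Sum>j=1..k i. lam i j)"

definition Omega_fam :: "nat \<Rightarrow> (nat \<Rightarrow> nat) \<Rightarrow> (nat \<Rightarrow> nat) \<Rightarrow> (nat \<Rightarrow> nat \<Rightarrow> nat) set" where
  "Omega_fam q k n = {x. (\<forall>i\<in>{1..q}. (\<Sum>j=1..k i. j * x i j) = n i) \<and>
       (\<forall>i j. \<not> (i \<in> {1..q} \<and> j \<in> {1..k i}) \<longrightarrow> x i j = 0)}"

text \<open>p is the family of one-dimensional marginal laws of the MGCP: p s n = Pr{M(s) = n},
characterized by the joint probability generating function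
exp(-s * sum_{i,j} lam_ij (1 - u_i^j)), |u_i| <= 1.\<close>
definition is_MGCP_marginals ::
  "nat \<Rightarrow> (nat \<Rightarrow> nat) \<Rightarrow> (nat \<Rightarrow> nat \<Rightarrow> real) \<Rightarrow> (real \<Rightarrow> (nat \<Rightarrow> nat) \<Rightarrow> real) \<Rightarrow> bool" where
  "is_MGCP_marginals q k lam p \<longleftrightarrow>
     (\<forall>s\<ge>0. (\<forall>n\<in>natvecs q. p s n \<ge> 0) \<and>
        (\<forall>u::nat \<Rightarrow> real. (\<forall>i\<in>{1..q}. \<bar>u i\<bar> \<le> 1) \<longrightarrow>
           ((\<lambda>n. p s n * (\<Prod>i=1..q. u i ^ n i)) has_sum
              exp (- s * (\<Sum>i=1..q. \<Sum>j=1..k i. lam i j * (1 - u i ^ j)))) (natvecs q)))"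

text \<open>mu is the law of D_alpha(t): a probability measure on [0,oo) with Laplace
transform E exp(-s D_alpha(t)) = exp(-t s^alpha).\<close>
definition is_stable_subordinator_law :: "real \<Rightarrow> real \<Rightarrow> real measure \<Rightarrow> bool" where
  "is_stable_subordinator_law \<alpha> t \<mu> \<longleftrightarrow>
     prob_space \<mu> \<and> sets \<mu> = sets borel \<and> (AE x in \<mu>. x \<ge> 0) \<and>
     (\<forall>s\<ge>0. (\<integral>x. exp (- s * x) \<partial>\<mu>) = exp (- t * s powr \<alpha>))"

end

theory Submission
  imports Defs "HOL-Complex_Analysis.Cauchy_Integral_Formula"
begin

(* Conditioning on the subordinator, Pr{M^alpha(t) = n} is the integral of Pr{M(s) = n} against
   the law mu of D_alpha(t).  The generating function identifies the law of M(s) with that of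
   (sum_j j x_ij)_i for independent Poisson(s lam_ij) counts x_ij, so Pr{M(s) = n} is
   exp(-lambda s) times a finite sum over Omega of monomials s^m prod lam_ij^x_ij / x_ij!.
   For the moments, expand the Laplace transform of mu at lambda + h,
   exp(-t (lambda + h)^alpha), in powers of h in two ways: through the moments
   int s^m exp(-lambda s) dmu, and through the exponential and binomial series.  Comparing
   coefficients gives (-lambda)^m int s^m exp(-lambda s) dmu
   = sum_r (-t lambda^alpha)^r / r! Gamma(alpha r + 1) / Gamma(alpha r - m + 1). *)

section \<open>Power series and products of series\<close>

lemma powser_sums_zero_imp_coeff_zero:
  fixes c :: "nat \<Rightarrow> 'a::{real_normed_field,banach}"
  assumes r: "r > 0" and sums0: "\<And>h. norm h < r \<Longrightarrow> (\<lambda>m. c m * h ^ m) sums 0"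
  shows "c m = 0"
proof (rule ccontr)
  assume cm: "c m \<noteq> 0"
  have "c 0 = 0"
    using sums0[of 0] r by simp
  with cm have "m > 0"
    by (cases m) auto
  with powser_0_nonzero[of r 0 c "\<lambda>_. 0" m] r sums0 cm
  obtain s where "s > 0" and "\<And>z::'a. z \<in> cball 0 s - {0} \<Longrightarrow> False"
    by auto
  from this(2)[of "of_real s"] \<open>s > 0\<close> show False
    by simp
qed

lemma has_sum_prod_PiE:
  fixes f :: "'a \<Rightarrow> 'b \<Rightarrow> 'c::{real_normed_field,banach,second_countable_topology}"
  assumes "finite A" and "\<And>x. x \<in> A \<Longrightarrow> countable (B x)"
    and "\<And>x. x \<in> A \<Longrightarrow> (f x has_sum s x) (B x)"
    and "\<And>x. x \<in> A \<Longrightarrow> (\<lambda>y. norm (f x y)) summable_on B x"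
  shows "((\<lambda>g. \<Prod>x\<in>A. f x (g x)) has_sum (\<Prod>x\<in>A. s x)) (PiE A B)"
proof -
  have "Infinite_Set_Sum.abs_summable_on (\<lambda>g. \<Prod>x\<in>A. f x (g x)) (PiE A B)"
  proof (rule abs_summable_on_prod_PiE)
    show "Infinite_Set_Sum.abs_summable_on (f x) (B x)" if "x \<in> A" for x
      using assms(4)[OF that] abs_summable_equivalent by blast
  qed (use assms in auto)
  then have sum: "(\<lambda>g. \<Prod>x\<in>A. f x (g x)) summable_on PiE A B"
    using abs_summable_equivalent abs_summable_summable by blast
  have "infsum (\<lambda>g. \<Prod>x\<in>A. f x (g x)) (PiE A B) = (\<Prod>x\<in>A. infsum (f x) (B x))"
    using assms(1,4) by (rule infsum_prod_PiE_abs)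
  also have "\<dots> = (\<Prod>x\<in>A. s x)"
    using assms(3) by (intro prod.cong refl) (rule infsumI)
  finally show ?thesis
    using sum by (metis has_sum_infsum)
qed

lemma has_sum_exp_real:
  fixes x :: real
  shows "((\<lambda>m. x ^ m / fact m) has_sum exp x) UNIV"
    and "(\<lambda>m. norm (x ^ m / fact m)) summable_on UNIV"
proof -
  show "((\<lambda>m. x ^ m / fact m) has_sum exp x) UNIV" for x :: real
    using norm_summable_imp_has_sum[OF summable_norm_exp exp_converges, of x]
    by (simp add: divide_inverse mult.commute)
  from this[of "\<bar>x\<bar>"] show "(\<lambda>m. norm (x ^ m / fact m)) summable_on UNIV"
    by (auto simp: summable_on_def power_abs)
qed

lemma summable_on_sums_imp_has_sum:
  fixes f :: "nat \<Rightarrow> 'a::{t2_space,topological_comm_monoid_add}"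
  assumes "f summable_on UNIV" and "f sums s"
  shows "(f has_sum s) UNIV"
  using has_sum_infsum[OF assms(1)] has_sum_imp_sums sums_unique2[OF assms(2)] by metis

section \<open>Uniqueness of multivariate generating functions\<close>

lemma natvecs_Suc_split:
  "n \<in> natvecs (Suc q) \<longleftrightarrow> n(Suc q := 0) \<in> natvecs q"
  by (auto simp: natvecs_def)

lemma prod_Suc_upd_power:
  fixes u :: "nat \<Rightarrow> 'a::comm_monoid_mult"
  shows "(\<Prod>i=1..Suc q. (u(Suc q := y)) i ^ (n(Suc q := m)) i) = (\<Prod>i=1..q. u i ^ n i) * y ^ m"
proof -
  have "(\<Prod>i=1..q. (u(Suc q := y)) i ^ (n(Suc q := m)) i) = (\<Prod>i=1..q. u i ^ n i)"
    by (intro prod.cong) auto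
  then show ?thesis
    by (simp add: prod.nat_ivl_Suc' mult.commute)
qed

text \<open>Splitting off the last variable y turns a generating function on natvecs (Suc q) into a power
series in y whose coefficients are the generating functions of the slices n (Suc q) = m.\<close>

lemma natvecs_Suc_pgf_slice_eq_0:
  fixes d :: "(nat \<Rightarrow> nat) \<Rightarrow> real"
  assumes pgf: "\<And>u. \<forall>i\<in>{1..Suc q}. \<bar>u i\<bar> \<le> 1 \<Longrightarrow>
      ((\<lambda>n. d n * (\<Prod>i=1..Suc q. u i ^ n i)) has_sum 0) (natvecs (Suc q))"
    and u: "\<forall>i\<in>{1..q}. \<bar>u i\<bar> \<le> 1"
  shows "((\<lambda>n. d (n(Suc q := m)) * (\<Prod>i=1..q. u i ^ n i)) has_sum 0) (natvecs q)"
proof -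
  let ?v = "Suc q"
  have split: "((\<lambda>(m, n). d (n(?v := m)) * ((\<Prod>i=1..q. u i ^ n i) * y ^ m)) has_sum 0) (UNIV \<times> natvecs q)"
    if y: "\<bar>y\<bar> \<le> 1" for y
  proof -
    have "((\<lambda>n. d n * (\<Prod>i=1..?v. (u(?v := y)) i ^ n i)) has_sum 0) (natvecs ?v)"
      using u y by (intro pgf) auto
    also have "?this \<longleftrightarrow> ?thesis"
      by (rule has_sum_reindex_bij_witness[where i = "\<lambda>(m, n). n(?v := m)" and j = "\<lambda>n. (n ?v, n(?v := 0))"])
        (auto simp: natvecs_Suc_split prod_Suc_upd_power natvecs_def fun_eq_iff)
    finally show ?thesis .
  qed
  define G where "G m = infsum (\<lambda>n. d (n(?v := m)) * (\<Prod>i=1..q. u i ^ n i)) (natvecs q)" for m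
  have G: "((\<lambda>n. d (n(?v := m)) * (\<Prod>i=1..q. u i ^ n i)) has_sum G m) (natvecs q)" for m
  proof -
    have "(\<lambda>n. d (n(?v := m)) * ((\<Prod>i=1..q. u i ^ n i) * (1 / 2) ^ m)) summable_on natvecs q"
      using summable_on_SigmaD1[OF has_sum_imp_summable[OF split[of "1 / 2"]]] by auto
    then have "(\<lambda>n. d (n(?v := m)) * (\<Prod>i=1..q. u i ^ n i) * (1 / 2) ^ m) summable_on natvecs q"
      by (simp add: mult.assoc)
    then show ?thesis
      unfolding G_def by (subst (asm) summable_on_cmult_left') simp_all
  qed
  have "G m = 0"
  proof (rule powser_sums_zero_imp_coeff_zero[where r = 1])
    fix y :: real
    assume "norm y < 1"
    then have "((\<lambda>m. G m * y ^ m) has_sum 0) UNIV"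
      using has_sum_Sigma'[OF split, of y] has_sum_cmult_left[OF G] by (auto simp: mult.assoc)
    then show "(\<lambda>m. G m * y ^ m) sums 0"
      by (rule has_sum_imp_sums)
  qed simp
  with G[of m] show ?thesis
    by simp
qed

lemma natvecs_pgf_eq_0_imp_eq_0:
  fixes d :: "(nat \<Rightarrow> nat) \<Rightarrow> real"
  assumes "\<And>u. \<forall>i\<in>{1..q}. \<bar>u i\<bar> \<le> 1 \<Longrightarrow> ((\<lambda>n. d n * (\<Prod>i=1..q. u i ^ n i)) has_sum 0) (natvecs q)"
    and "n \<in> natvecs q"
  shows "d n = 0"
  using assms
proof (induction q arbitrary: d n)
  case 0
  have "natvecs 0 = {n}"
    using "0.prems"(2) by (auto simp: natvecs_def)
  with "0.prems"(1)[of "\<lambda>_. 0"] have "(d has_sum 0) {n}"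
    by simp
  then show ?case
    using has_sum_unique has_sum_finite[of "{n}" d] by fastforce
next
  case (Suc q)
  have "d (n'(Suc q := m)) = 0" if "n' \<in> natvecs q" for n' m
    using natvecs_Suc_pgf_slice_eq_0[OF Suc.prems(1)] that by (rule Suc.IH)
  moreover have "n(Suc q := 0) \<in> natvecs q"
    using Suc.prems(2) natvecs_Suc_split by blast
  ultimately have "d ((n(Suc q := 0))(Suc q := n (Suc q))) = 0"
    by blast
  then show ?case
    by (simp only: fun_upd_upd fun_upd_triv)
qed

section \<open>The marginal law of the MGCP\<close>

text \<open>A family x i j counts the jumps of size j of the i-th component; in the MGCP these counts are
independent Poisson variables with means s * lam i j, and M_i(s) = \<Sum>j. j * x i j.\<close>

definition jump_index :: "nat \<Rightarrow> (nat \<Rightarrow> nat) \<Rightarrow> (nat \<times> nat) set" where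
  "jump_index q k = Sigma {1..q} (\<lambda>i. {1..k i})"

definition jump_counts :: "nat \<Rightarrow> (nat \<Rightarrow> nat) \<Rightarrow> (nat \<Rightarrow> nat \<Rightarrow> nat) set" where
  "jump_counts q k = {x. \<forall>i j. (i, j) \<notin> jump_index q k \<longrightarrow> x i j = 0}"

definition jump_total :: "nat \<Rightarrow> (nat \<Rightarrow> nat) \<Rightarrow> (nat \<Rightarrow> nat \<Rightarrow> nat) \<Rightarrow> nat \<Rightarrow> nat" where
  "jump_total q k x i = (if i \<in> {1..q} then \<Sum>j=1..k i. j * x i j else 0)"

definition poisson_counts_prob ::
  "nat \<Rightarrow> (nat \<Rightarrow> nat) \<Rightarrow> (nat \<Rightarrow> nat \<Rightarrow> real) \<Rightarrow> real \<Rightarrow> (nat \<Rightarrow> nat \<Rightarrow> nat) \<Rightarrow> real" where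
  "poisson_counts_prob q k lam s x =
     (\<Prod>i=1..q. \<Prod>j=1..k i. exp (- s * lam i j) * (s * lam i j) ^ x i j / fact (x i j))"

definition MGCP_pmf :: "nat \<Rightarrow> (nat \<Rightarrow> nat) \<Rightarrow> (nat \<Rightarrow> nat \<Rightarrow> real) \<Rightarrow> real \<Rightarrow> (nat \<Rightarrow> nat) \<Rightarrow> real" where
  "MGCP_pmf q k lam s n = (\<Sum>x\<in>Omega_fam q k n. poisson_counts_prob q k lam s x)"

lemma finite_jump_index [simp]: "finite (jump_index q k)"
  by (simp add: jump_index_def)

lemma jump_total_in_natvecs: "jump_total q k x \<in> natvecs q"
  by (simp add: jump_total_def natvecs_def)

lemma Omega_fam_eq:
  assumes "n \<in> natvecs q"
  shows "Omega_fam q k n = {x \<in> jump_counts q k. jump_total q k x = n}"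
  using assms by (auto simp: Omega_fam_def jump_counts_def jump_total_def natvecs_def jump_index_def fun_eq_iff)

lemma finite_Omega_fam: "finite (Omega_fam q k n)"
proof -
  let ?I = "jump_index q k"
  let ?fam = "\<lambda>g i j. if (i, j) \<in> ?I then g (i, j) else 0"
  have "Omega_fam q k n \<subseteq> ?fam ` PiE ?I (\<lambda>(i, j). {0..n i})"
  proof
    fix x
    assume x: "x \<in> Omega_fam q k n"
    have "x i j \<le> n i" if "(i, j) \<in> ?I" for i j
    proof -
      have "x i j \<le> j * x i j"
        using that by (simp add: jump_index_def)
      also have "\<dots> \<le> (\<Sum>j'=1..k i. j' * x i j')"
        using that by (intro member_le_sum) (auto simp: jump_index_def)
      also have "\<dots> = n i"
        using x that by (auto simp: Omega_fam_def jump_index_def)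
      finally show ?thesis .
    qed
    then have "restrict (\<lambda>(i, j). x i j) ?I \<in> PiE ?I (\<lambda>(i, j). {0..n i})"
      by auto
    moreover have "x = ?fam (restrict (\<lambda>(i, j). x i j) ?I)"
      using x by (auto simp: Omega_fam_def jump_index_def fun_eq_iff)
    ultimately show "x \<in> ?fam ` PiE ?I (\<lambda>(i, j). {0..n i})"
      by blast
  qed
  then show ?thesis
    by (rule finite_subset) (intro finite_imageI finite_PiE; auto)
qed

lemma poisson_counts_prob_pgf_term:
  "(\<Prod>(i, j)\<in>jump_index q k. exp (- s * lam i j) * ((s * lam i j * u i ^ j) ^ x i j / fact (x i j))) =
     poisson_counts_prob q k lam s x * (\<Prod>i=1..q. u i ^ jump_total q k x i)"
proof -
  have "(\<Prod>(i, j)\<in>jump_index q k. exp (- s * lam i j) * ((s * lam i j * u i ^ j) ^ x i j / fact (x i j))) =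
      (\<Prod>i=1..q. \<Prod>j=1..k i. exp (- s * lam i j) * ((s * lam i j * u i ^ j) ^ x i j / fact (x i j)))"
    by (simp add: jump_index_def prod.Sigma split_def)
  also have "\<dots> =
      (\<Prod>i=1..q. \<Prod>j=1..k i. exp (- s * lam i j) * (s * lam i j) ^ x i j / fact (x i j) * u i ^ (j * x i j))"
    by (intro prod.cong refl) (simp add: power_mult_distrib power_mult)
  also have "\<dots> = poisson_counts_prob q k lam s x * (\<Prod>i=1..q. \<Prod>j=1..k i. u i ^ (j * x i j))"
    by (simp only: poisson_counts_prob_def prod.distrib)
  also have "(\<Prod>i=1..q. \<Prod>j=1..k i. u i ^ (j * x i j)) = (\<Prod>i=1..q. u i ^ jump_total q k x i)"
    by (intro prod.cong refl) (simp add: jump_total_def power_sum)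
  finally show ?thesis .
qed

lemma poisson_counts_pgf:
  "((\<lambda>x. poisson_counts_prob q k lam s x * (\<Prod>i=1..q. u i ^ jump_total q k x i)) has_sum
      exp (- s * (\<Sum>i=1..q. \<Sum>j=1..k i. lam i j * (1 - u i ^ j)))) (jump_counts q k)"
proof -
  let ?I = "jump_index q k"
  define w where "w = (\<lambda>(i, j) m. exp (- s * lam i j) * ((s * lam i j * u i ^ j) ^ m / fact m))"
  have "((\<lambda>g. \<Prod>z\<in>?I. w z (g z)) has_sum
      (\<Prod>(i, j)\<in>?I. exp (- s * lam i j) * exp (s * lam i j * u i ^ j))) (PiE ?I (\<lambda>_. UNIV))"
  proof (rule has_sum_prod_PiE)
    fix z :: "nat \<times> nat"
    obtain i j where z: "z = (i, j)"
      by fastforce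
    show "(w z has_sum (case z of (i, j) \<Rightarrow> exp (- s * lam i j) * exp (s * lam i j * u i ^ j))) UNIV"
      using has_sum_cmult_right[OF has_sum_exp_real(1)[of "s * lam i j * u i ^ j"], of "exp (- s * lam i j)"]
      unfolding w_def z by simp
    show "(\<lambda>m. norm (w z m)) summable_on UNIV"
      using summable_on_cmult_right[OF has_sum_exp_real(2)[of "s * lam i j * u i ^ j"], of "exp (- s * lam i j)"]
      unfolding w_def z by (simp add: abs_mult)
  qed auto
  also have "(\<Prod>(i, j)\<in>?I. exp (- s * lam i j) * exp (s * lam i j * u i ^ j)) =
      exp (\<Sum>i=1..q. \<Sum>j=1..k i. s * lam i j * u i ^ j - s * lam i j)"
    by (simp add: jump_index_def exp_sum prod.Sigma split_def exp_diff exp_minus field_simps)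
  also have "(\<Sum>i=1..q. \<Sum>j=1..k i. s * lam i j * u i ^ j - s * lam i j) =
      - s * (\<Sum>i=1..q. \<Sum>j=1..k i. lam i j * (1 - u i ^ j))"
    by (simp add: sum_distrib_left algebra_simps)
  also have "((\<lambda>g. \<Prod>z\<in>?I. w z (g z)) has_sum exp (- s * (\<Sum>i=1..q. \<Sum>j=1..k i. lam i j * (1 - u i ^ j))))
      (PiE ?I (\<lambda>_. UNIV)) \<longleftrightarrow> ?thesis"
  proof (rule sym, rule has_sum_reindex_bij_witness[where j = "\<lambda>x. restrict (\<lambda>(i, j). x i j) ?I"
        and i = "\<lambda>g i j. if (i, j) \<in> ?I then g (i, j) else 0"], goal_cases)
    case (5 x)
    have "(\<Prod>z\<in>?I. w z (restrict (\<lambda>(i, j). x i j) ?I z)) =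
        (\<Prod>(i, j)\<in>?I. exp (- s * lam i j) * ((s * lam i j * u i ^ j) ^ x i j / fact (x i j)))"
      by (intro prod.cong) (auto simp: w_def)
    with poisson_counts_prob_pgf_term[where q = q and k = k and s = s and lam = lam and u = u and x = x]
    show ?case
      by simp
  qed (auto simp: jump_counts_def fun_eq_iff)
  finally show ?thesis .
qed

lemma MGCP_pmf_pgf:
  "((\<lambda>n. MGCP_pmf q k lam s n * (\<Prod>i=1..q. u i ^ n i)) has_sum
      exp (- s * (\<Sum>i=1..q. \<Sum>j=1..k i. lam i j * (1 - u i ^ j)))) (natvecs q)"
proof -
  have "((\<lambda>x. poisson_counts_prob q k lam s x * (\<Prod>i=1..q. u i ^ jump_total q k x i)) has_sum
      exp (- s * (\<Sum>i=1..q. \<Sum>j=1..k i. lam i j * (1 - u i ^ j)))) (jump_counts q k)"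
    by (rule poisson_counts_pgf)
  also have "?this \<longleftrightarrow> ((\<lambda>(n, x). poisson_counts_prob q k lam s x * (\<Prod>i=1..q. u i ^ n i)) has_sum
      exp (- s * (\<Sum>i=1..q. \<Sum>j=1..k i. lam i j * (1 - u i ^ j)))) (Sigma (natvecs q) (Omega_fam q k))"
    by (rule has_sum_reindex_bij_witness[where i = snd and j = "\<lambda>x. (jump_total q k x, x)"])
      (auto simp: Omega_fam_eq jump_total_in_natvecs)
  finally have grouped: "((\<lambda>(n, x). poisson_counts_prob q k lam s x * (\<Prod>i=1..q. u i ^ n i)) has_sum
      exp (- s * (\<Sum>i=1..q. \<Sum>j=1..k i. lam i j * (1 - u i ^ j)))) (Sigma (natvecs q) (Omega_fam q k))" .
  have "((\<lambda>x. poisson_counts_prob q k lam s x * (\<Prod>i=1..q. u i ^ n i)) has_sum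
      MGCP_pmf q k lam s n * (\<Prod>i=1..q. u i ^ n i)) (Omega_fam q k n)" for n
    unfolding MGCP_pmf_def sum_distrib_right by (rule has_sum_finite[OF finite_Omega_fam])
  with has_sum_Sigma'[OF grouped] show ?thesis
    by simp
qed

lemma MGCP_marginals_eq_pmf:
  assumes "is_MGCP_marginals q k lam p" and "s \<ge> 0" and "n \<in> natvecs q"
  shows "p s n = MGCP_pmf q k lam s n"
proof -
  have "p s n - MGCP_pmf q k lam s n = 0"
  proof (rule natvecs_pgf_eq_0_imp_eq_0[OF _ assms(3)])
    fix u :: "nat \<Rightarrow> real"
    assume "\<forall>i\<in>{1..q}. \<bar>u i\<bar> \<le> 1"
    with assms(1,2) have "((\<lambda>n. p s n * (\<Prod>i=1..q. u i ^ n i)) has_sum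
        exp (- s * (\<Sum>i=1..q. \<Sum>j=1..k i. lam i j * (1 - u i ^ j)))) (natvecs q)"
      by (auto simp: is_MGCP_marginals_def)
    from has_sum_add[OF this has_sum_uminusI[OF MGCP_pmf_pgf[where q = q and k = k and lam = lam and s = s and u = u]]]
    show "((\<lambda>n. (p s n - MGCP_pmf q k lam s n) * (\<Prod>i=1..q. u i ^ n i)) has_sum 0) (natvecs q)"
      by (simp add: left_diff_distrib)
  qed
  then show ?thesis
    by simp
qed

lemma poisson_counts_prob_eq:
  "poisson_counts_prob q k lam s x =
     exp (- s * total_rate q k lam) * s ^ (\<Sum>i=1..q. \<Sum>j=1..k i. x i j) *
     (\<Prod>i=1..q. \<Prod>j=1..k i. lam i j ^ x i j / fact (x i j))"
proof -
  have "poisson_counts_prob q k lam s x =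
      (\<Prod>i=1..q. \<Prod>j=1..k i. exp (- s * lam i j) * s ^ x i j * (lam i j ^ x i j / fact (x i j)))"
    unfolding poisson_counts_prob_def by (intro prod.cong refl) (simp add: power_mult_distrib)
  also have "\<dots> = (\<Prod>i=1..q. \<Prod>j=1..k i. exp (- s * lam i j)) * (\<Prod>i=1..q. \<Prod>j=1..k i. s ^ x i j) *
      (\<Prod>i=1..q. \<Prod>j=1..k i. lam i j ^ x i j / fact (x i j))"
    by (simp only: prod.distrib)
  also have "(\<Prod>i=1..q. \<Prod>j=1..k i. exp (- s * lam i j)) = exp (- s * total_rate q k lam)"
    by (simp add: total_rate_def exp_sum sum_distrib_left)
  also have "(\<Prod>i=1..q. \<Prod>j=1..k i. s ^ x i j) = s ^ (\<Sum>i=1..q. \<Sum>j=1..k i. x i j)"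
    by (simp add: power_sum)
  finally show ?thesis .
qed

section \<open>Exponential moments of the stable subordinator\<close>

lemma power_div_fact_le_exp:
  fixes x :: real
  assumes "x \<ge> 0"
  shows "x ^ m / fact m \<le> exp x"
  using finite_sum_le_has_sum[OF has_sum_exp_real(1), of "{m}"] assms by simp

lemma integrable_power_mult_exp:
  fixes \<mu> :: "real measure"
  assumes "finite_measure \<mu>" and "sets \<mu> = sets borel" and "AE x in \<mu>. x \<ge> 0" and "l > 0"
  shows "integrable \<mu> (\<lambda>x. x ^ m * exp (- l * x))"
proof (rule finite_measure.integrable_const_bound[OF assms(1), where B = "fact m / l ^ m"])
  show "AE x in \<mu>. norm (x ^ m * exp (- l * x)) \<le> fact m / l ^ m"
    using assms(3)
  proof eventually_elim
    case (elim x)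
    have "(l * x) ^ m / fact m \<le> exp (l * x)"
      using elim assms(4) by (intro power_div_fact_le_exp) simp
    then have "x ^ m * exp (- l * x) * l ^ m \<le> fact m"
      by (simp add: field_simps exp_minus)
    with elim assms(4) show ?case
      by (simp add: field_simps)
  qed
  show "(\<lambda>x. x ^ m * exp (- l * x)) \<in> borel_measurable \<mu>"
    unfolding measurable_cong_sets[OF assms(2) refl] by measurable
qed

lemma exp_shift_sums:
  fixes h l x :: real
  shows "(\<lambda>m. (- h) ^ m / fact m * (x ^ m * exp (- l * x))) sums exp (- (l + h) * x)"
proof -
  have "(\<lambda>m. (- h * x) ^ m /\<^sub>R fact m * exp (- l * x)) sums (exp (- h * x) * exp (- l * x))"
    by (rule sums_mult2[OF exp_converges])
  moreover have "(- h * x) ^ m /\<^sub>R fact m * exp (- l * x) = (- h) ^ m / fact m * (x ^ m * exp (- l * x))" for m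
    by (simp add: power_mult_distrib[symmetric] divide_inverse)
  moreover have "exp (- h * x) * exp (- l * x) = exp (- (l + h) * x)"
    by (simp add: algebra_simps flip: exp_add)
  ultimately show ?thesis
    by simp
qed

lemma abs_exp_shift_partial_sum_le_1:
  fixes h l x :: real
  assumes "x \<ge> 0" and "\<bar>h\<bar> \<le> l"
  shows "\<bar>\<Sum>m<N. (- h) ^ m / fact m * (x ^ m * exp (- l * x))\<bar> \<le> 1"
proof -
  have "\<bar>\<Sum>m<N. (- h) ^ m / fact m * (x ^ m * exp (- l * x))\<bar> \<le> (\<Sum>m<N. (\<bar>h\<bar> * x) ^ m / fact m) * exp (- l * x)"
    unfolding sum_distrib_right
    by (rule order_trans[OF sum_abs]) (use assms in \<open>auto simp: abs_mult power_abs power_mult_distrib mult.assoc\<close>)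
  also have "\<dots> \<le> exp (\<bar>h\<bar> * x) * exp (- l * x)"
  proof (rule mult_right_mono)
    show "(\<Sum>m<N. (\<bar>h\<bar> * x) ^ m / fact m) \<le> exp (\<bar>h\<bar> * x)"
      by (rule finite_sum_le_has_sum[OF has_sum_exp_real(1)]) (use assms in auto)
  qed simp
  also have "\<dots> = exp ((\<bar>h\<bar> - l) * x)"
    by (simp add: algebra_simps flip: exp_add)
  also have "\<dots> \<le> 1"
    using assms by (simp add: mult_nonpos_nonneg)
  finally show ?thesis .
qed

lemma laplace_transform_powser:
  fixes \<mu> :: "real measure"
  assumes fin: "finite_measure \<mu>" and sets: "sets \<mu> = sets borel" and nonneg: "AE x in \<mu>. x \<ge> 0"
    and h: "\<bar>h\<bar> < l"
  shows "(\<lambda>m. (- h) ^ m / fact m * (\<integral>x. x ^ m * exp (- l * x) \<partial>\<mu>)) sums (\<integral>x. exp (- (l + h) * x) \<partial>\<mu>)"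
proof -
  interpret finite_measure \<mu> by (rule fin)
  define S where "S N x = (\<Sum>m<N. (- h) ^ m / fact m * (x ^ m * exp (- l * x)))" for N x
  have "(\<lambda>N. \<integral>x. S N x \<partial>\<mu>) \<longlonglongrightarrow> (\<integral>x. exp (- (l + h) * x) \<partial>\<mu>)"
  proof (rule integral_dominated_convergence[where w = "\<lambda>_. 1"])
    show "AE x in \<mu>. (\<lambda>N. S N x) \<longlonglongrightarrow> exp (- (l + h) * x)"
      using exp_shift_sums by (simp add: S_def sums_def)
    show "AE x in \<mu>. norm (S N x) \<le> 1" for N
      using nonneg
      by eventually_elim (use abs_exp_shift_partial_sum_le_1[OF _ less_imp_le[OF h]] in \<open>simp add: S_def\<close>)
  next
    show "(\<lambda>x. exp (- (l + h) * x)) \<in> borel_measurable \<mu>" and "S N \<in> borel_measurable \<mu>" for N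
      unfolding measurable_cong_sets[OF sets refl] S_def by measurable
  qed simp
  moreover have "(\<integral>x. S N x \<partial>\<mu>) = (\<Sum>m<N. (- h) ^ m / fact m * (\<integral>x. x ^ m * exp (- l * x) \<partial>\<mu>))" for N
    unfolding S_def using integrable_power_mult_exp[OF fin sets nonneg] h by simp
  ultimately show ?thesis
    by (simp add: sums_def)
qed

lemma abs_gbinomial_le_pochhammer:
  fixes a r :: real
  assumes "0 \<le> a" and "a \<le> r"
  shows "\<bar>a gchoose m\<bar> \<le> pochhammer r m / fact m"
proof -
  have "\<bar>pochhammer (- a) m\<bar> = (\<Prod>i<m. \<bar>- a + real i\<bar>)"
    by (simp add: pochhammer_prod atLeast0LessThan abs_prod)
  also have "\<dots> \<le> (\<Prod>i<m. r + real i)"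
    by (intro prod_mono) (use assms in auto)
  also have "\<dots> = pochhammer r m"
    by (simp add: pochhammer_prod atLeast0LessThan)
  finally show ?thesis
    by (simp add: gbinomial_pochhammer abs_mult divide_right_mono)
qed

text \<open>The coefficient of h^m in the binomial expansion of (-t)^r/r! * (l + h) powr (\<alpha> r); summed over
r it gives the Taylor coefficients of exp (- t * (l + h) powr \<alpha>) at h = 0.\<close>

definition exp_powr_coeff :: "real \<Rightarrow> real \<Rightarrow> real \<Rightarrow> nat \<Rightarrow> nat \<Rightarrow> real" where
  "exp_powr_coeff \<alpha> t l r m = (- t) ^ r / fact r * ((\<alpha> * real r) gchoose m) * l powr (\<alpha> * real r - real m)"

lemma abs_exp_powr_coeff_le:
  assumes "0 \<le> \<alpha>" and "\<alpha> \<le> 1"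
  shows "\<bar>exp_powr_coeff \<alpha> t l r m\<bar> \<le>
    \<bar>t\<bar> ^ r / fact r * (pochhammer (real r) m / fact m) * l powr (\<alpha> * real r - real m)"
proof -
  have "\<bar>exp_powr_coeff \<alpha> t l r m\<bar> =
      \<bar>t\<bar> ^ r / fact r * \<bar>(\<alpha> * real r) gchoose m\<bar> * l powr (\<alpha> * real r - real m)"
    by (simp add: exp_powr_coeff_def abs_mult power_abs)
  also have "\<dots> \<le> \<bar>t\<bar> ^ r / fact r * (pochhammer (real r) m / fact m) * l powr (\<alpha> * real r - real m)"
    using assms by (intro mult_right_mono mult_left_mono abs_gbinomial_le_pochhammer)
      (auto intro: mult_left_le_one_le)
  finally show ?thesis .
qed

lemma pochhammer_binomial_sums:
  fixes x l :: real
  assumes "\<bar>x\<bar> < l"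
  shows "(\<lambda>m. pochhammer (real r) m / fact m * x ^ m * l powr (- real r - real m)) sums (l - x) powr (- real r)"
proof -
  have "(\<lambda>m. (- real r gchoose m) * (- x) ^ m * l powr (- real r - real m)) sums (- x + l) powr (- real r)"
    using assms by (intro gen_binomial_real') simp
  moreover have "(- real r gchoose m) * (- x) ^ m = pochhammer (real r) m / fact m * x ^ m" for m
    by (simp add: gbinomial_pochhammer power_minus')
  ultimately show ?thesis
    by simp
qed

lemma exp_powr_coeff_summable_on:
  fixes \<alpha> t l h :: real
  assumes \<alpha>: "0 \<le> \<alpha>" "\<alpha> \<le> 1" and h: "\<bar>h\<bar> < l"
  shows "(\<lambda>(r, m). h ^ m * exp_powr_coeff \<alpha> t l r m) summable_on UNIV"
proof -
  define c where "c = \<bar>t\<bar> * (l powr (\<alpha> + 1) / (l - \<bar>h\<bar>))"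
  define B where "B = (\<lambda>(r, m). \<bar>t\<bar> ^ r / fact r * (pochhammer (real r) m / fact m)
      * l powr (\<alpha> * real r - real m) * \<bar>h\<bar> ^ m)"
  have l: "l > 0" "l - \<bar>h\<bar> > 0"
    using h by auto
  have B_nonneg: "B (r, m) \<ge> 0" for r m
    unfolding B_def by (simp add: pochhammer_prod prod_nonneg)
  have row: "((\<lambda>m. B (r, m)) has_sum c ^ r / fact r) UNIV" for r
  proof (rule sums_nonneg_imp_has_sum[OF _ B_nonneg])
    have "(\<lambda>m. \<bar>t\<bar> ^ r / fact r * l powr (\<alpha> * real r + real r) *
        (pochhammer (real r) m / fact m * \<bar>h\<bar> ^ m * l powr (- real r - real m)))
        sums (\<bar>t\<bar> ^ r / fact r * l powr (\<alpha> * real r + real r) * (l - \<bar>h\<bar>) powr (- real r))"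
      using h by (intro sums_mult pochhammer_binomial_sums) simp
    moreover have "l powr (\<alpha> * real r + real r) * l powr (- real r - real m) = l powr (\<alpha> * real r - real m)" for m
      by (simp add: powr_add[symmetric])
    moreover have "l powr (\<alpha> * real r + real r) * (l - \<bar>h\<bar>) powr (- real r) = (l powr (\<alpha> + 1) / (l - \<bar>h\<bar>)) ^ r"
    proof -
      have "l powr (\<alpha> * real r + real r) = (l powr (\<alpha> + 1)) ^ r"
        using l by (simp add: powr_realpow[symmetric] powr_powr algebra_simps)
      moreover have "(l - \<bar>h\<bar>) powr (- real r) = 1 / (l - \<bar>h\<bar>) ^ r"
        using l by (simp add: powr_minus powr_realpow divide_inverse)
      ultimately show ?thesis
        by (simp add: power_divide)
    qed
    ultimately show "(\<lambda>m. B (r, m)) sums (c ^ r / fact r)"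
      by (simp add: B_def c_def power_mult_distrib power_divide mult_ac)
  qed
  have "(\<lambda>r. c ^ r / fact r) summable_on UNIV"
    using has_sum_exp_real(1) by (auto simp: summable_on_def)
  then have "B summable_on Sigma UNIV (\<lambda>_. UNIV)"
    using row B_nonneg by (intro summable_on_SigmaI) auto
  then have "B summable_on UNIV"
    by simp
  have bound: "norm (h ^ m * exp_powr_coeff \<alpha> t l r m) \<le> B (r, m)" for r m
    using mult_left_mono[OF abs_exp_powr_coeff_le[OF \<alpha>, of t l r m], of "\<bar>h\<bar> ^ m"]
    by (simp add: B_def abs_mult power_abs mult_ac)
  have "(\<lambda>(r, m). norm (h ^ m * exp_powr_coeff \<alpha> t l r m)) summable_on UNIV"
  proof (rule summable_on_comparison_test[OF \<open>B summable_on UNIV\<close>])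
    fix x :: "nat \<times> nat"
    show "(\<lambda>(r, m). norm (h ^ m * exp_powr_coeff \<alpha> t l r m)) x \<le> B x"
      using bound[of "snd x" "fst x"] by (simp add: case_prod_unfold)
  qed (simp add: case_prod_unfold)
  then show ?thesis
    by (simp add: case_prod_unfold abs_summable_summable)
qed

lemma summable_exp_powr_coeff:
  assumes "0 \<le> \<alpha>" and "\<alpha> \<le> 1" and "l > 0"
  shows "summable (\<lambda>r. exp_powr_coeff \<alpha> t l r m)"
proof -
  have "(\<lambda>(r, m). (l / 2) ^ m * exp_powr_coeff \<alpha> t l r m) summable_on UNIV \<times> UNIV"
    using assms exp_powr_coeff_summable_on[of \<alpha> "l / 2" l t] by simp
  then have "(\<lambda>(m, r). (l / 2) ^ m * exp_powr_coeff \<alpha> t l r m) summable_on UNIV \<times> UNIV"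
    by (subst (asm) summable_on_swap) simp
  then have "(\<lambda>r. (l / 2) ^ m * exp_powr_coeff \<alpha> t l r m) summable_on UNIV"
    by (rule summable_on_SigmaD1[where f = "\<lambda>m r. (l / 2) ^ m * exp_powr_coeff \<alpha> t l r m", simplified]) simp
  then have "(\<lambda>r. exp_powr_coeff \<alpha> t l r m) summable_on UNIV"
    using assms(3) by (subst (asm) summable_on_cmult_right') simp_all
  then show ?thesis
    by (rule summable_on_imp_summable)
qed

lemma exp_powr_coeff_row_sums:
  assumes "\<bar>h\<bar> < l"
  shows "(\<lambda>m. h ^ m * exp_powr_coeff \<alpha> t l r m) sums ((- t * (l + h) powr \<alpha>) ^ r / fact r)"
proof -
  have "(\<lambda>m. ((\<alpha> * real r) gchoose m) * h ^ m * l powr (\<alpha> * real r - real m)) sums (h + l) powr (\<alpha> * real r)"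
    using assms by (intro gen_binomial_real') simp
  from sums_mult[OF this, of "(- t) ^ r / fact r"]
  have "(\<lambda>m. h ^ m * exp_powr_coeff \<alpha> t l r m) sums ((- t) ^ r / fact r * (l + h) powr (\<alpha> * real r))"
    by (simp add: exp_powr_coeff_def add.commute mult_ac)
  moreover have "(l + h) powr (\<alpha> * real r) = ((l + h) powr \<alpha>) ^ r"
    using assms by (simp add: powr_realpow[symmetric] powr_powr)
  ultimately show ?thesis
    by (simp flip: power_mult_distrib)
qed

lemma exp_powr_coeff_sums:
  fixes \<alpha> t l h :: real
  assumes \<alpha>: "0 \<le> \<alpha>" "\<alpha> \<le> 1" and h: "\<bar>h\<bar> < l"
  shows "(\<lambda>m. h ^ m * (\<Sum>r. exp_powr_coeff \<alpha> t l r m)) sums exp (- t * (l + h) powr \<alpha>)"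
proof -
  define G where "G = (\<lambda>(r, m). h ^ m * exp_powr_coeff \<alpha> t l r m)"
  have G: "G summable_on UNIV \<times> UNIV"
    unfolding G_def using exp_powr_coeff_summable_on[OF \<alpha> h] by simp
  have row: "((\<lambda>m. G (r, m)) has_sum (- t * (l + h) powr \<alpha>) ^ r / fact r) UNIV" for r
  proof (rule summable_on_sums_imp_has_sum)
    show "(\<lambda>m. G (r, m)) summable_on UNIV"
      using summable_on_SigmaD1[where f = "\<lambda>r m. G (r, m)", of UNIV "\<lambda>_. UNIV"] G by simp
    show "(\<lambda>m. G (r, m)) sums ((- t * (l + h) powr \<alpha>) ^ r / fact r)"
      unfolding G_def case_prod_conv by (rule exp_powr_coeff_row_sums[OF h])
  qed
  have "((\<lambda>r. (- t * (l + h) powr \<alpha>) ^ r / fact r) has_sum infsum G (UNIV \<times> UNIV)) UNIV"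
    using has_sum_Sigma'[OF has_sum_infsum[OF G] row] by simp
  then have G_sum: "(G has_sum exp (- t * (l + h) powr \<alpha>)) (UNIV \<times> UNIV)"
    using has_sum_infsum[OF G] has_sum_unique has_sum_exp_real(1) by metis
  then have G_swap: "((\<lambda>(m, r). G (r, m)) has_sum exp (- t * (l + h) powr \<alpha>)) (UNIV \<times> UNIV)"
    by (subst (asm) has_sum_swap) simp
  have col: "((\<lambda>r. G (r, m)) has_sum h ^ m * (\<Sum>r. exp_powr_coeff \<alpha> t l r m)) UNIV" for m
  proof (rule summable_on_sums_imp_has_sum)
    show "(\<lambda>r. G (r, m)) summable_on UNIV"
      using summable_on_SigmaD1[where f = "\<lambda>m r. G (r, m)", of UNIV "\<lambda>_. UNIV"] G_swap
      by (auto simp: summable_on_def)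
    have "summable (\<lambda>r. exp_powr_coeff \<alpha> t l r m)"
      using \<alpha> h by (intro summable_exp_powr_coeff) auto
    from sums_mult[OF summable_sums[OF this], of "h ^ m"]
    show "(\<lambda>r. G (r, m)) sums (h ^ m * (\<Sum>r. exp_powr_coeff \<alpha> t l r m))"
      by (simp add: G_def)
  qed
  have "((\<lambda>m. h ^ m * (\<Sum>r. exp_powr_coeff \<alpha> t l r m)) has_sum exp (- t * (l + h) powr \<alpha>)) UNIV"
    by (rule has_sum_Sigma'[OF G_swap]) (use col in simp)
  then show ?thesis
    by (rule has_sum_imp_sums)
qed

lemma stable_laplace_moment_eq_coeff_sum:
  assumes D: "is_stable_subordinator_law \<alpha> t \<mu>" and \<alpha>: "0 \<le> \<alpha>" "\<alpha> \<le> 1" and l: "l > 0"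
  shows "(- 1) ^ m / fact m * (\<integral>x. x ^ m * exp (- l * x) \<partial>\<mu>) = (\<Sum>r. exp_powr_coeff \<alpha> t l r m)"
proof -
  have fin: "finite_measure \<mu>" and sets: "sets \<mu> = sets borel" and nonneg: "AE x in \<mu>. x \<ge> 0"
    and laplace: "\<And>s. s \<ge> 0 \<Longrightarrow> (\<integral>x. exp (- s * x) \<partial>\<mu>) = exp (- t * s powr \<alpha>)"
    using D by (auto simp: is_stable_subordinator_law_def prob_space_def)
  have "(- 1) ^ m / fact m * (\<integral>x. x ^ m * exp (- l * x) \<partial>\<mu>) - (\<Sum>r. exp_powr_coeff \<alpha> t l r m) = 0"
  proof (rule powser_sums_zero_imp_coeff_zero[OF l])
    fix h :: real
    assume "norm h < l"
    then have h: "\<bar>h\<bar> < l"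
      by simp
    have "(\<lambda>m. (- h) ^ m / fact m * (\<integral>x. x ^ m * exp (- l * x) \<partial>\<mu>) - h ^ m * (\<Sum>r. exp_powr_coeff \<alpha> t l r m))
        sums (exp (- t * (l + h) powr \<alpha>) - exp (- t * (l + h) powr \<alpha>))"
      using laplace_transform_powser[OF fin sets nonneg h] laplace[of "l + h"] h
        exp_powr_coeff_sums[OF \<alpha> h, of t] by (intro sums_diff) auto
    then show "(\<lambda>m. ((- 1) ^ m / fact m * (\<integral>x. x ^ m * exp (- l * x) \<partial>\<mu>) - (\<Sum>r. exp_powr_coeff \<alpha> t l r m)) * h ^ m)
        sums 0"
      by (simp add: power_minus' algebra_simps)
  qed
  then show ?thesis
    by simp
qed

lemma fact_mult_gbinomial_eq_Gamma:
  fixes a :: real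
  assumes "a \<ge> 0"
  shows "fact m * (a gchoose m) = Gamma (a + 1) * rGamma (a - real m + 1)"
proof -
  have "a + 1 \<notin> \<int>\<^sub>\<le>\<^sub>0"
    using assms nonpos_Ints_nonpos by fastforce
  then show ?thesis
    by (simp add: gbinomial_Gamma rGamma_inverse_Gamma divide_inverse)
qed

lemma exp_powr_coeff_eq_Gamma:
  assumes "\<alpha> \<ge> 0" and "l > 0"
  shows "l ^ m * fact m * exp_powr_coeff \<alpha> t l r m =
    (- t * l powr \<alpha>) ^ r / fact r * Gamma (\<alpha> * real r + 1) * rGamma (\<alpha> * real r - real m + 1)"
proof -
  have "l ^ m * fact m * exp_powr_coeff \<alpha> t l r m =
      (fact m * ((\<alpha> * real r) gchoose m)) * (l ^ m * l powr (\<alpha> * real r - real m)) * (- t) ^ r / fact r"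
    by (simp add: exp_powr_coeff_def algebra_simps)
  also have "l ^ m * l powr (\<alpha> * real r - real m) = (l powr \<alpha>) ^ r"
    using assms(2) by (simp add: powr_diff powr_realpow[symmetric] powr_powr mult.commute)
  also have "fact m * ((\<alpha> * real r) gchoose m) = Gamma (\<alpha> * real r + 1) * rGamma (\<alpha> * real r - real m + 1)"
    using assms(1) by (intro fact_mult_gbinomial_eq_Gamma) simp
  finally show ?thesis
    by (simp add: algebra_simps flip: power_mult_distrib)
qed

lemma stable_laplace_moment_sums:
  assumes "is_stable_subordinator_law \<alpha> t \<mu>" and "0 \<le> \<alpha>" "\<alpha> \<le> 1" and "l > 0"
  shows "(\<lambda>r. (- t * l powr \<alpha>) ^ r / fact r * Gamma (\<alpha> * real r + 1) * rGamma (\<alpha> * real r - real m + 1))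
    sums ((- l) ^ m * (\<integral>x. x ^ m * exp (- l * x) \<partial>\<mu>))"
proof -
  have "(\<lambda>r. l ^ m * fact m * exp_powr_coeff \<alpha> t l r m) sums (l ^ m * fact m * (\<Sum>r. exp_powr_coeff \<alpha> t l r m))"
    using assms by (intro sums_mult summable_sums summable_exp_powr_coeff)
  also have "l ^ m * fact m * (\<Sum>r. exp_powr_coeff \<alpha> t l r m) = (- l) ^ m * (\<integral>x. x ^ m * exp (- l * x) \<partial>\<mu>)"
    using stable_laplace_moment_eq_coeff_sum[OF assms, of m, symmetric] by (simp add: power_minus')
  finally show ?thesis
    using assms by (simp add: exp_powr_coeff_eq_Gamma)
qed

lemma total_rate_pos:
  assumes "q \<ge> 1" and "\<forall>i\<in>{1..q}. k i \<ge> 1" and "\<forall>i\<in>{1..q}. \<forall>j\<in>{1..k i}. lam i j > 0"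
  shows "total_rate q k lam > 0"
  unfolding total_rate_def using assms by (intro sum_pos) auto

lemma prod_neg_div_power_fact:
  fixes lam :: "nat \<Rightarrow> nat \<Rightarrow> real"
  assumes "L \<noteq> 0"
  shows "(\<Prod>i=1..q. \<Prod>j=1..k i. (- lam i j / L) ^ x i j / fact (x i j)) =
    (\<Prod>i=1..q. \<Prod>j=1..k i. lam i j ^ x i j / fact (x i j)) / (- L) ^ (\<Sum>i=1..q. \<Sum>j=1..k i. x i j)"
proof -
  have "(- a / L) ^ m / f = a ^ m / f / (- L) ^ m" for a f :: real and m
  proof -
    have "- a / L = a / - L"
      by simp
    then show ?thesis
      by (simp only: power_divide divide_divide_eq_left mult.commute)
  qed
  then have "(\<Prod>i=1..q. \<Prod>j=1..k i. (- lam i j / L) ^ x i j / fact (x i j)) =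
      (\<Prod>i=1..q. \<Prod>j=1..k i. lam i j ^ x i j / fact (x i j) / (- L) ^ x i j)"
    by (intro prod.cong refl)
  also have "\<dots> = (\<Prod>i=1..q. \<Prod>j=1..k i. lam i j ^ x i j / fact (x i j)) / (\<Prod>i=1..q. \<Prod>j=1..k i. (- L) ^ x i j)"
    by (simp only: prod_dividef)
  also have "(\<Prod>i=1..q. \<Prod>j=1..k i. (- L) ^ x i j) = (- L) ^ (\<Sum>i=1..q. \<Sum>j=1..k i. x i j)"
    by (simp only: power_sum)
  finally show ?thesis .
qed

lemma integral_MGCP_pmf_stable:
  assumes D: "is_stable_subordinator_law \<alpha> t \<mu>" and \<alpha>: "0 \<le> \<alpha>" "\<alpha> \<le> 1"
    and L: "total_rate q k lam > 0"
  shows "(\<integral>s. MGCP_pmf q k lam s n \<partial>\<mu>) =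
    (\<Sum>x\<in>Omega_fam q k n.
       (\<Sum>r. (- t * total_rate q k lam powr \<alpha>) ^ r / fact r
              * Gamma (\<alpha> * real r + 1)
              * rGamma (\<alpha> * real r - real (\<Sum>i=1..q. \<Sum>j=1..k i. x i j) + 1)
              * (\<Prod>i=1..q. \<Prod>j=1..k i. (- lam i j / total_rate q k lam) ^ x i j / fact (x i j))))"
proof -
  define L where "L = total_rate q k lam"
  define jumps where "jumps x = (\<Sum>i=1..q. \<Sum>j=1..k i. x i j)" for x :: "nat \<Rightarrow> nat \<Rightarrow> nat"
  define C where "C x = (\<Prod>i=1..q. \<Prod>j=1..k i. lam i j ^ x i j / fact (x i j))" for x :: "nat \<Rightarrow> nat \<Rightarrow> nat"
  define I where "I m = (\<integral>s. s ^ m * exp (- L * s) \<partial>\<mu>)" for m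
  define T where "T m r = (- t * L powr \<alpha>) ^ r / fact r * Gamma (\<alpha> * real r + 1) * rGamma (\<alpha> * real r - real m + 1)"
    for m r
  have "L > 0"
    using L by (simp add: L_def)
  have fin: "finite_measure \<mu>" and sets: "sets \<mu> = sets borel" and nonneg: "AE x in \<mu>. x \<ge> 0"
    using D by (auto simp: is_stable_subordinator_law_def prob_space_def)
  have "(\<integral>s. MGCP_pmf q k lam s n \<partial>\<mu>) = (\<integral>s. (\<Sum>x\<in>Omega_fam q k n. C x * (s ^ jumps x * exp (- L * s))) \<partial>\<mu>)"
    by (simp add: MGCP_pmf_def poisson_counts_prob_eq L_def C_def jumps_def mult_ac)
  also have "\<dots> = (\<Sum>x\<in>Omega_fam q k n. C x * I (jumps x))"
    using integrable_power_mult_exp[OF fin sets nonneg \<open>L > 0\<close>] by (simp add: I_def)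
  also have "\<dots> = (\<Sum>x\<in>Omega_fam q k n. \<Sum>r. T (jumps x) r *
      (\<Prod>i=1..q. \<Prod>j=1..k i. (- lam i j / L) ^ x i j / fact (x i j)))"
  proof (intro sum.cong refl)
    fix x
    have "(\<lambda>r. T (jumps x) r * (C x / (- L) ^ jumps x)) sums ((- L) ^ jumps x * I (jumps x) * (C x / (- L) ^ jumps x))"
      using stable_laplace_moment_sums[OF D \<alpha> \<open>L > 0\<close>] unfolding T_def I_def by (rule sums_mult2)
    also have "(- L) ^ jumps x * I (jumps x) * (C x / (- L) ^ jumps x) = C x * I (jumps x)"
      using \<open>L > 0\<close> by simp
    also have "C x / (- L) ^ jumps x = (\<Prod>i=1..q. \<Prod>j=1..k i. (- lam i j / L) ^ x i j / fact (x i j))"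
      using \<open>L > 0\<close> unfolding C_def jumps_def by (intro prod_neg_div_power_fact[symmetric]) simp
    finally show "C x * I (jumps x) =
        (\<Sum>r. T (jumps x) r * (\<Prod>i=1..q. \<Prod>j=1..k i. (- lam i j / L) ^ x i j / fact (x i j)))"
      by (rule sums_unique)
  qed
  finally show ?thesis
    by (simp only: L_def jumps_def T_def)
qed

theorem mainTheorem3:
  fixes q :: nat and k :: "nat \<Rightarrow> nat" and lam :: "nat \<Rightarrow> nat \<Rightarrow> real"
    and \<alpha> t :: real and p :: "real \<Rightarrow> (nat \<Rightarrow> nat) \<Rightarrow> real" and \<mu> :: "real measure"
    and n :: "nat \<Rightarrow> nat"
  assumes q: "q \<ge> 1"
    and k: "\<forall>i\<in>{1..q}. k i \<ge> 1"
    and lam: "\<forall>i\<in>{1..q}. \<forall>j\<in>{1..k i}. lam i j > 0"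
    and alpha: "0 < \<alpha>" "\<alpha> < 1"
    and t: "t \<ge> 0"
    and M: "is_MGCP_marginals q k lam p"
    and D: "is_stable_subordinator_law \<alpha> t \<mu>"
    and n: "n \<in> natvecs q"
  shows "(\<integral>s\<in>{0..}. p s n \<partial>\<mu>) =
    (\<Sum>x\<in>Omega_fam q k n.
       (\<Sum>r. (- t * total_rate q k lam powr \<alpha>) ^ r / fact r
              * Gamma (\<alpha> * real r + 1)
              * rGamma (\<alpha> * real r - real (\<Sum>i=1..q. \<Sum>j=1..k i. x i j) + 1)
              * (\<Prod>i=1..q. \<Prod>j=1..k i. (- lam i j / total_rate q k lam) ^ x i j / fact (x i j))))"
proof -
  have sets: "sets \<mu> = sets borel" and nonneg: "AE s in \<mu>. s \<ge> 0"
    using D by (auto simp: is_stable_subordinator_law_def)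
  have "(\<integral>s\<in>{0..}. p s n \<partial>\<mu>) = (\<integral>s. indicator {0..} s * MGCP_pmf q k lam s n \<partial>\<mu>)"
    unfolding set_lebesgue_integral_def
    by (intro Bochner_Integration.integral_cong) (auto simp: indicator_def MGCP_marginals_eq_pmf[OF M _ n])
  also have "\<dots> = (\<integral>s. MGCP_pmf q k lam s n \<partial>\<mu>)"
  proof (rule integral_cong_AE)
    show "AE s in \<mu>. indicator {0..} s * MGCP_pmf q k lam s n = MGCP_pmf q k lam s n"
      using nonneg by eventually_elim simp
  qed (unfold measurable_cong_sets[OF sets refl] MGCP_pmf_def poisson_counts_prob_def; measurable)+
  finally show ?thesis
    using integral_MGCP_pmf_stable[OF D _ _ total_rate_pos[OF q k lam]] alpha by simp
qed

end
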